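(* Let $(\mathcal{K},[\cdot,\cdot])$ be a Krein space with canonical decomposition $\mathcal{K}=\mathcal{K}^+\oplus\mathcal{K}^-$, and let $\{f_n\}_{n\in I}$, $I=I_+\sqcup I_-$, be a Riesz basis for $(\mathcal{K},[\cdot,\cdot])$ with $f_n=U^+e_n$ for $n\in I_+$ and $f_n=U^-e_n$ for $n\in I_-$, where $\{e_n\}_{n\in I_+}$ is an orthonormal basis of $\mathcal{K}^+$, $\{e_n\}_{n\in I_-}$ is an orthonormal basis of $\mathcal{K}^-$, and $U^+:\mathcal{K}^+\to\mathcal{K}^+$, $U^-:\mathcal{K}^-\to\mathcal{K}^-$ are bounded bijective linear operators. Then there exist positive constants $A,B,A',B'$ such that \[A\|f\|^2\le\sum_{n\in I_+}|[f,f_n]|^2\le B\|f\|^2\quad\text{for all } f\in\mathcal{K}^+\] and \[A'\|f\|^2\le\sum_{n\in I_-}|[f,f_n]|^2\le B'\|f\|^2\quad\text{for all } f\in\mathcal{K}^-.\] Moreover, the largest possible values of $A$ and $A'$ are $\frac{1}{\|(U^+)^{-1}\|^2}$ and $\frac{1}{\|(U^-)^{-1}\|^2}$ respectively, and the smallest possible values of $B$ and $B'$ are $\|U^+\|^2$ and $\|U^-\|^2$ respectively.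
   Context: A Krein space $(\mathcal{K},[\cdot,\cdot])$ is a vector space with a Hermitian sesquilinear (indefinite) form $[\cdot,\cdot]$ admitting a $[\cdot,\cdot]$-orthogonal direct sum decomposition $\mathcal{K}=\mathcal{K}^+\oplus\mathcal{K}^-$ such that $(\mathcal{K}^+,[\cdot,\cdot])$ and $(\mathcal{K}^-,-[\cdot,\cdot])$ are Hilbert spaces. The norm on $\mathcal{K}^+$ is $\|x\|=[x,x]^{1/2}$ and on $\mathcal{K}^-$ is $\|x\|=(-[x,x])^{1/2}$. Orthonormal bases, adjoints and operator norms on $\mathcal{K}^\pm$ are taken with respect to these Hilbert space structures. *)

theory Defs
  imports "HOL-Analysis.Analysis"
begin

(* A complex vector space is represented by a type 'a :: ab_group_add together with
   a scalar multiplication  sc :: complex => 'a => 'a  satisfying  vector_space sc. *)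

definition fnorm :: "('a \<Rightarrow> 'a \<Rightarrow> complex) \<Rightarrow> 'a \<Rightarrow> real" where
  "fnorm G x = sqrt (Re (G x x))"

definition hilbert_part :: "('a::ab_group_add \<Rightarrow> 'a \<Rightarrow> complex) \<Rightarrow> 'a set \<Rightarrow> bool" where
  "hilbert_part G S \<longleftrightarrow>
     (\<forall>x\<in>S. x \<noteq> 0 \<longrightarrow> Re (G x x) > 0) \<and>
     (\<forall>X. (\<forall>n. X n \<in> S) \<and>
          (\<forall>e>0. \<exists>N. \<forall>m\<ge>N. \<forall>n\<ge>N. fnorm G (X m - X n) < e)
        \<longrightarrow> (\<exists>x\<in>S. (\<lambda>n. fnorm G (X n - x)) \<longlonglongrightarrow> 0))"

definition krein_space ::
  "(complex \<Rightarrow> 'a::ab_group_add \<Rightarrow> 'a) \<Rightarrow> ('a \<Rightarrow> 'a \<Rightarrow> complex) \<Rightarrow> 'a set \<Rightarrow> 'a set \<Rightarrow> bool" where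
  "krein_space sc B Kp Km \<longleftrightarrow>
     vector_space sc \<and>
     (\<forall>x y z. B (x + y) z = B x z + B y z) \<and>
     (\<forall>c x y. B (sc c x) y = c * B x y) \<and>
     (\<forall>x y. B y x = cnj (B x y)) \<and>
     module.subspace sc Kp \<and> module.subspace sc Km \<and>
     Kp \<inter> Km = {0} \<and> (\<forall>x. \<exists>p\<in>Kp. \<exists>m\<in>Km. x = p + m) \<and>
     (\<forall>p\<in>Kp. \<forall>m\<in>Km. B p m = 0) \<and>
     hilbert_part B Kp \<and> hilbert_part (\<lambda>x y. - B x y) Km"

definition onb :: "('a::ab_group_add \<Rightarrow> 'a \<Rightarrow> complex) \<Rightarrow> 'a set \<Rightarrow> 'i set \<Rightarrow> ('i \<Rightarrow> 'a) \<Rightarrow> bool" where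
  "onb G S I e \<longleftrightarrow>
     (\<forall>n\<in>I. e n \<in> S) \<and>
     (\<forall>n\<in>I. \<forall>m\<in>I. G (e n) (e m) = (if n = m then 1 else 0)) \<and>
     (\<forall>x\<in>S. (\<forall>n\<in>I. G x (e n) = 0) \<longrightarrow> x = 0)"

definition bounded_bij_op ::
  "(complex \<Rightarrow> 'a::ab_group_add \<Rightarrow> 'a) \<Rightarrow> ('a \<Rightarrow> 'a \<Rightarrow> complex) \<Rightarrow> 'a set \<Rightarrow> ('a \<Rightarrow> 'a) \<Rightarrow> bool" where
  "bounded_bij_op sc G S U \<longleftrightarrow>
     bij_betw U S S \<and>
     (\<forall>x\<in>S. \<forall>y\<in>S. U (x + y) = U x + U y) \<and>
     (\<forall>c. \<forall>x\<in>S. U (sc c x) = sc c (U x)) \<and>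
     (\<exists>C. \<forall>x\<in>S. fnorm G (U x) \<le> C * fnorm G x)"

definition opnorm :: "('a \<Rightarrow> 'a \<Rightarrow> complex) \<Rightarrow> 'a set \<Rightarrow> ('a \<Rightarrow> 'a) \<Rightarrow> real" where
  "opnorm G S U = Sup {fnorm G (U x) | x. x \<in> S \<and> fnorm G x \<le> 1}"

definition coef_summable :: "('a \<Rightarrow> 'a \<Rightarrow> complex) \<Rightarrow> ('i \<Rightarrow> 'a) \<Rightarrow> 'i set \<Rightarrow> 'a \<Rightarrow> bool" where
  "coef_summable B fb I f \<longleftrightarrow> (\<lambda>n. (cmod (B f (fb n)))\<^sup>2) summable_on I"

definition coef_sum :: "('a \<Rightarrow> 'a \<Rightarrow> complex) \<Rightarrow> ('i \<Rightarrow> 'a) \<Rightarrow> 'i set \<Rightarrow> 'a \<Rightarrow> real" where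
  "coef_sum B fb I f = infsum (\<lambda>n. (cmod (B f (fb n)))\<^sup>2) I"

end

theory Submission
  imports Defs
begin

(*
  For n in I+ we have [f, f_n] = [f, U e_n] = [U* f, e_n], where U = U+ and U* is its adjoint
  on the Hilbert space K+; by Parseval's identity the frame sum of f in K+ is therefore
  ||U* f||^2.  So the optimal frame bounds are the optimal constants in
  A ||f||^2 <= ||V f||^2 <= B ||f||^2 for V = U*, namely 1 / ||V^-1||^2 and ||V||^2.  Since
  V^-1 = (U^-1)* and taking adjoints preserves operator norms, these are 1 / ||U^-1||^2 and
  ||U||^2.  The same argument works on K- with the Hilbert form -[.,.].

  Adjoints are obtained from the Riesz representation theorem, proved with the orthonormal
  basis (Bessel, Riesz-Fischer, Parseval); that U^-1 is bounded is the bounded inverse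
  theorem, proved from the Baire category theorem by successive approximation.
*)

lemma cmod_square_eq_mult_cnj: "(complex_of_real (cmod z))\<^sup>2 = z * cnj z"
  and cmod_square_eq_cnj_mult: "(complex_of_real (cmod z))\<^sup>2 = cnj z * z"
  using complex_norm_square[of z] by (simp_all add: mult.commute)

lemma LIMSEQ_of_norm_diff_le_null:
  fixes f :: "nat \<Rightarrow> 'b::real_normed_vector"
  assumes "g \<longlonglongrightarrow> 0" "\<And>k. norm (f k - l) \<le> C * g k"
  shows "f \<longlonglongrightarrow> l"
proof -
  have "(\<lambda>k. C * g k) \<longlonglongrightarrow> 0" using tendsto_mult_right_zero[OF assms(1)] by simp
  then have "(\<lambda>k. f k - l) \<longlonglongrightarrow> 0"
    by (rule Lim_null_comparison[rotated]) (use assms(2) in auto)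
  then show ?thesis by (rule LIM_zero_cancel)
qed

lemma sum_half_powers: "m \<le> n \<Longrightarrow> (\<Sum>i\<in>{m..<n}. (1/2::real)^i) = 2 * (1/2)^m - 2 * (1/2)^n"
proof (induction n rule: dec_induct)
  case (step n) then show ?case by (simp add: sum.atLeastLessThan_Suc)
qed simp

lemma power2_le_mult_imp_le:
  fixes a b :: real assumes "a\<^sup>2 \<le> b * a" "0 \<le> b" shows "a \<le> b"
proof (cases "a > 0")
  case True then show ?thesis using assms(1) by (simp add: power2_eq_square)
qed (use assms(2) in simp)

lemma summable_on_small_tails:
  fixes p :: "'i \<Rightarrow> real"
  assumes p: "p summable_on I" "\<And>n. n \<in> I \<Longrightarrow> 0 \<le> p n" and \<epsilon>: "\<epsilon> > 0"
  shows "\<exists>F0. finite F0 \<and> F0 \<subseteq> I \<and> (\<forall>H. finite H \<longrightarrow> H \<subseteq> I - F0 \<longrightarrow> sum p H \<le> \<epsilon>)"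
proof -
  obtain F0 where F0: "finite F0" "F0 \<subseteq> I" "dist (sum p F0) (infsum p I) \<le> \<epsilon>"
    using infsum_finite_approximation[OF p(1) \<epsilon>] by blast
  have "sum p H \<le> \<epsilon>" if H: "finite H" "H \<subseteq> I - F0" for H
  proof -
    have "sum p F0 + sum p H = sum p (F0 \<union> H)" using F0 H by (intro sum.union_disjoint[symmetric]) auto
    also have "\<dots> \<le> infsum p I" using F0 H p by (intro finite_sum_le_infsum) auto
    finally show ?thesis using F0(3) by (simp add: dist_real_def abs_le_iff)
  qed
  then show ?thesis using F0 by blast
qed

lemma summable_on_tail_sets:
  fixes p :: "'i \<Rightarrow> real"
  assumes p: "p summable_on I" "\<And>n. n \<in> I \<Longrightarrow> 0 \<le> p n"
  obtains F where "\<And>k. finite (F k)" "\<And>k. F k \<subseteq> I" "incseq F"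
    "\<And>k H. finite H \<Longrightarrow> H \<subseteq> I - F k \<Longrightarrow> sum p H \<le> 1 / real (Suc k)"
    "\<And>n. n \<in> I \<Longrightarrow> p n > 0 \<Longrightarrow> \<exists>k. n \<in> F k"
proof -
  have "\<forall>k. \<exists>F0. finite F0 \<and> F0 \<subseteq> I \<and>
      (\<forall>H. finite H \<longrightarrow> H \<subseteq> I - F0 \<longrightarrow> sum p H \<le> 1 / real (Suc k))"
    using summable_on_small_tails[OF p] by simp
  then obtain H0 where H0: "\<And>k. finite (H0 k)" "\<And>k. H0 k \<subseteq> I"
    "\<And>k H. finite H \<Longrightarrow> H \<subseteq> I - H0 k \<Longrightarrow> sum p H \<le> 1 / real (Suc k)"
    by (metis choice)
  define F where "F k = (\<Union>j\<le>k. H0 j)" for k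
  have tail: "sum p H \<le> 1 / real (Suc k)" if "finite H" "H \<subseteq> I - F k" for k H
    using that H0(3)[of H k] unfolding F_def by blast
  show thesis
  proof (rule that)
    show "finite (F k)" "F k \<subseteq> I" for k unfolding F_def using H0(1,2) by auto
    show "incseq F" unfolding F_def by (intro monoI UN_mono) auto
    show "sum p H \<le> 1 / real (Suc k)" if "finite H" "H \<subseteq> I - F k" for k H using that by (rule tail)
    show "\<exists>k. n \<in> F k" if n: "n \<in> I" "p n > 0" for n
    proof (rule ccontr)
      assume none: "\<nexists>k. n \<in> F k"
      obtain k where "inverse (real (Suc k)) < p n" using reals_Archimedean n(2) by blast
      moreover have "sum p {n} \<le> 1 / real (Suc k)" using n(1) none by (intro tail) auto
      ultimately show False by (simp add: inverse_eq_divide)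
    qed
  qed
qed

section \<open>Hilbert spaces given by a form on a subspace\<close>

text \<open>\<open>G\<close> need only be positive definite on \<open>S\<close>: the application uses the indefinite Krein form
  on \<open>K\<^sup>+\<close> and its negative on \<open>K\<^sup>-\<close>.\<close>
locale hilbert_subspace =
  fixes sc :: "complex \<Rightarrow> 'a::ab_group_add \<Rightarrow> 'a" and G :: "'a \<Rightarrow> 'a \<Rightarrow> complex" and S :: "'a set"
  assumes module: "module sc"
    and form_add_left: "\<And>x y z. G (x + y) z = G x z + G y z"
    and form_scale_left: "\<And>c x y. G (sc c x) y = c * G x y"
    and form_cnj: "\<And>x y. G y x = cnj (G x y)"
    and subspace: "module.subspace sc S"
    and hilbert: "hilbert_part G S"
begin

sublocale module sc by (rule module)

abbreviation hnorm :: "'a \<Rightarrow> real" where "hnorm \<equiv> fnorm G"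

lemma S_zero: "0 \<in> S" using subspace subspace_0 by blast
lemma S_add: "x \<in> S \<Longrightarrow> y \<in> S \<Longrightarrow> x + y \<in> S" using subspace subspace_add by blast
lemma S_diff: "x \<in> S \<Longrightarrow> y \<in> S \<Longrightarrow> x - y \<in> S" using subspace subspace_diff by blast
lemma S_minus: "x \<in> S \<Longrightarrow> - x \<in> S" using subspace subspace_neg by blast
lemma S_scale: "x \<in> S \<Longrightarrow> sc c x \<in> S" using subspace subspace_scale by blast
lemma S_sum: "(\<And>i. i \<in> F \<Longrightarrow> f i \<in> S) \<Longrightarrow> sum f F \<in> S" using subspace subspace_sum by blast

lemma form_zero_left [simp]: "G 0 y = 0" using form_add_left[of 0 0 y] by simp
lemma form_minus_left: "G (- x) y = - G x y"
  using form_add_left[of x "- x" y] by (simp add: add_eq_0_iff)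
lemma form_diff_left: "G (x - y) z = G x z - G y z"
  using form_add_left[of x "- y" z] form_minus_left by simp
lemma form_add_right: "G x (y + z) = G x y + G x z" by (metis form_add_left complex_cnj_add form_cnj)
lemma form_zero_right [simp]: "G x 0 = 0" by (metis form_zero_left complex_cnj_zero form_cnj)
lemma form_minus_right: "G x (- y) = - G x y" by (metis form_minus_left complex_cnj_minus form_cnj)
lemma form_diff_right: "G x (y - z) = G x y - G x z" by (metis form_diff_left complex_cnj_diff form_cnj)
lemma form_scale_right: "G x (sc c y) = cnj c * G x y" by (metis form_scale_left complex_cnj_mult form_cnj)
lemma form_sum_left: "G (sum f F) y = (\<Sum>i\<in>F. G (f i) y)"
  by (induction F rule: infinite_finite_induct) (auto simp: form_add_left)
lemma form_sum_right: "G y (sum f F) = (\<Sum>i\<in>F. G y (f i))"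
  by (induction F rule: infinite_finite_induct) (auto simp: form_add_right)
lemma form_self_real: "G x x = of_real (Re (G x x))"
  using form_cnj[of x x] by (simp add: complex_eq_iff)

lemma form_self_nonneg: "x \<in> S \<Longrightarrow> 0 \<le> Re (G x x)"
  using hilbert unfolding hilbert_part_def by (cases "x = 0") (auto intro: less_imp_le)

lemma hnorm_square: "x \<in> S \<Longrightarrow> (hnorm x)\<^sup>2 = Re (G x x)"
  using form_self_nonneg by (simp add: fnorm_def)
lemma hnorm_nonneg: "x \<in> S \<Longrightarrow> 0 \<le> hnorm x"
  using form_self_nonneg by (simp add: fnorm_def)
lemma hnorm_eq_0: "x \<in> S \<Longrightarrow> hnorm x = 0 \<longleftrightarrow> x = 0"
  using hilbert unfolding hilbert_part_def fnorm_def by force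
lemma hnorm_pos: "x \<in> S \<Longrightarrow> x \<noteq> 0 \<Longrightarrow> 0 < hnorm x"
  using hnorm_eq_0 hnorm_nonneg by (metis order_le_less)
lemma hnorm_zero [simp]: "hnorm 0 = 0" by (simp add: fnorm_def)
lemma form_self: "x \<in> S \<Longrightarrow> G x x = of_real ((hnorm x)\<^sup>2)"
  using form_self_real hnorm_square by metis
lemma hnorm_square_cmod: "x \<in> S \<Longrightarrow> (hnorm x)\<^sup>2 = cmod (G x x)"
  using form_self[of x] by (simp add: norm_power)
lemma hnorm_minus: "hnorm (- x) = hnorm x"
  by (simp add: fnorm_def form_minus_left form_minus_right)
lemma hnorm_minus_commute: "hnorm (x - y) = hnorm (y - x)"
  by (metis minus_diff_eq hnorm_minus)
lemma hnorm_scale: "hnorm (sc c x) = cmod c * hnorm x"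
proof -
  have "G (sc c x) (sc c x) = of_real ((cmod c)\<^sup>2) * G x x"
    by (simp add: form_scale_left form_scale_right cmod_square_eq_cnj_mult mult.assoc)
  then have "Re (G (sc c x) (sc c x)) = (cmod c)\<^sup>2 * Re (G x x)" by simp
  then show ?thesis by (simp add: fnorm_def real_sqrt_mult)
qed

lemma form_Cauchy_Schwarz:
  assumes "x \<in> S" "y \<in> S" shows "cmod (G x y) \<le> hnorm x * hnorm y"
proof (cases "y = 0")
  case False
  define g where "g = Re (G y y)"
  have g_pos: "g > 0" using hilbert False assms unfolding hilbert_part_def g_def by blast
  have Gyy: "G y y = of_real g" using form_self_real g_def by metis
  define a where "a = G x y"
  define t where "t = a / of_real g"
  have g_nz: "complex_of_real g \<noteq> 0" using g_pos by simp
  have "cnj t * a = of_real ((cmod a)\<^sup>2 / g)" "t * cnj a = of_real ((cmod a)\<^sup>2 / g)"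
    using g_nz by (simp_all add: t_def cmod_square_eq_mult_cnj field_simps)
  moreover have "t * cnj t * of_real g = of_real ((cmod a)\<^sup>2 / g)"
    using g_nz by (simp add: t_def field_simps power2_eq_square flip: of_real_mult)
      (metis cmod_square_eq_mult_cnj power2_eq_square of_real_mult)
  ultimately have "G (x - sc t y) (x - sc t y) = G x x - of_real ((cmod a)\<^sup>2 / g)"
    by (simp add: form_diff_left form_diff_right form_scale_left form_scale_right Gyy a_def
        algebra_simps flip: form_cnj)
  then have "Re (G (x - sc t y) (x - sc t y)) = Re (G x x) - (cmod a)\<^sup>2 / g" by simp
  with form_self_nonneg[of "x - sc t y"] assms S_scale S_diff
  have "(cmod a)\<^sup>2 / g \<le> Re (G x x)" by fastforce
  then have "(cmod a)\<^sup>2 \<le> Re (G x x) * g" using g_pos by (simp add: field_simps)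
  also have "\<dots> = (hnorm x * hnorm y)\<^sup>2" using assms by (simp add: hnorm_square g_def power_mult_distrib)
  finally show ?thesis unfolding a_def
    by (meson assms hnorm_nonneg mult_nonneg_nonneg power2_le_imp_le)
qed (simp add: assms hnorm_nonneg)

lemma hnorm_triangle:
  assumes "x \<in> S" "y \<in> S" shows "hnorm (x + y) \<le> hnorm x + hnorm y"
proof -
  have "G (x + y) (x + y) = G x x + G x y + cnj (G x y) + G y y"
    by (simp add: form_add_left form_add_right flip: form_cnj)
  then have "(hnorm (x + y))\<^sup>2 = (hnorm x)\<^sup>2 + 2 * Re (G x y) + (hnorm y)\<^sup>2"
    using assms S_add by (simp add: hnorm_square)
  also have "\<dots> \<le> (hnorm x + hnorm y)\<^sup>2"
    using form_Cauchy_Schwarz[OF assms] complex_Re_le_cmod[of "G x y"] by (simp add: power2_sum)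
  finally show ?thesis by (meson assms add_nonneg_nonneg hnorm_nonneg power2_le_imp_le)
qed

lemma hnorm_diff_le: "x \<in> S \<Longrightarrow> y \<in> S \<Longrightarrow> hnorm (x - y) \<le> hnorm x + hnorm y"
  using hnorm_triangle[of x "- y"] S_minus hnorm_minus[of y] by simp

lemma hnorm_triangle_diff:
  "x \<in> S \<Longrightarrow> y \<in> S \<Longrightarrow> z \<in> S \<Longrightarrow> hnorm (x - z) \<le> hnorm (x - y) + hnorm (y - z)"
  using hnorm_triangle[of "x - y" "y - z"] S_diff by simp

lemma hnorm_sum_le: "(\<And>i. i \<in> A \<Longrightarrow> f i \<in> S) \<Longrightarrow> hnorm (sum f A) \<le> (\<Sum>i\<in>A. hnorm (f i))"
proof (induction A rule: infinite_finite_induct)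
  case (insert x F)
  have "hnorm (f x + sum f F) \<le> hnorm (f x) + hnorm (sum f F)"
    by (rule hnorm_triangle) (use insert.prems in \<open>auto intro: S_sum\<close>)
  then show ?case using insert by simp
qed auto

lemma hnorm_Cauchy_convergent:
  assumes "\<And>k. X k \<in> S" and "\<And>\<epsilon>. \<epsilon> > 0 \<Longrightarrow> \<exists>N. \<forall>m\<ge>N. \<forall>n\<ge>N. hnorm (X m - X n) < \<epsilon>"
  obtains x where "x \<in> S" "(\<lambda>k. hnorm (X k - x)) \<longlonglongrightarrow> 0"
  using hilbert assms unfolding hilbert_part_def by blast

lemma form_tendsto_left:
  assumes "\<And>k. X k \<in> S" "x \<in> S" "z \<in> S" "(\<lambda>k. hnorm (X k - x)) \<longlonglongrightarrow> 0"
  shows "(\<lambda>k. G (X k) z) \<longlonglongrightarrow> G x z"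
proof (rule LIMSEQ_of_norm_diff_le_null[OF assms(4), of _ _ "hnorm z"])
  fix k show "cmod (G (X k) z - G x z) \<le> hnorm z * hnorm (X k - x)"
    using form_Cauchy_Schwarz[of "X k - x" z] assms S_diff by (simp add: form_diff_left mult.commute)
qed

lemma form_eq_imp_eq:
  assumes "x \<in> S" "y \<in> S" "\<And>v. v \<in> S \<Longrightarrow> G v x = G v y"
  shows "x = y"
proof -
  have "G (x - y) (x - y) = 0" using assms S_diff by (simp add: form_diff_right)
  then have "hnorm (x - y) = 0" by (simp add: fnorm_def)
  then show ?thesis using hnorm_eq_0 assms S_diff by simp
qed

definition bounded_op :: "('a \<Rightarrow> 'a) \<Rightarrow> bool" where
  "bounded_op T \<longleftrightarrow> (\<forall>x\<in>S. T x \<in> S) \<and> (\<forall>x\<in>S. \<forall>y\<in>S. T (x + y) = T x + T y) \<and>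
     (\<forall>c. \<forall>x\<in>S. T (sc c x) = sc c (T x)) \<and> (\<exists>C. \<forall>x\<in>S. hnorm (T x) \<le> C * hnorm x)"

lemma bounded_bij_op_imp_bounded_op:
  assumes "bounded_bij_op sc G S U" shows "bounded_op U"
  using assms unfolding bounded_bij_op_def bounded_op_def by (metis bij_betw_apply)

lemma bounded_opI:
  assumes "\<And>x. x \<in> S \<Longrightarrow> T x \<in> S" "\<And>x y. x \<in> S \<Longrightarrow> y \<in> S \<Longrightarrow> T (x + y) = T x + T y"
    "\<And>c x. x \<in> S \<Longrightarrow> T (sc c x) = sc c (T x)" "\<And>x. x \<in> S \<Longrightarrow> hnorm (T x) \<le> C * hnorm x"
  shows "bounded_op T"
  unfolding bounded_op_def using assms by blast

context
  fixes T assumes T: "bounded_op T"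
begin

lemma bounded_op_in: "x \<in> S \<Longrightarrow> T x \<in> S" using T unfolding bounded_op_def by blast
lemma bounded_op_add: "x \<in> S \<Longrightarrow> y \<in> S \<Longrightarrow> T (x + y) = T x + T y" using T unfolding bounded_op_def by blast
lemma bounded_op_scale: "x \<in> S \<Longrightarrow> T (sc c x) = sc c (T x)" using T unfolding bounded_op_def by blast
lemma bounded_op_zero: "T 0 = 0" using bounded_op_add[OF S_zero S_zero] by simp
lemma bounded_op_diff: "x \<in> S \<Longrightarrow> y \<in> S \<Longrightarrow> T (x - y) = T x - T y"
  using bounded_op_add[of "x - y" y] S_diff by (simp add: algebra_simps)

lemma bdd_above_opnorm_set: "bdd_above {hnorm (T x) | x. x \<in> S \<and> hnorm x \<le> 1}"
proof -
  obtain C where C: "\<And>x. x \<in> S \<Longrightarrow> hnorm (T x) \<le> C * hnorm x" using T unfolding bounded_op_def by blast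
  have "hnorm (T x) \<le> max C 0" if "x \<in> S" "hnorm x \<le> 1" for x
  proof -
    have "C * hnorm x \<le> max C 0 * hnorm x" using hnorm_nonneg[OF that(1)] by (simp add: mult_right_mono)
    also have "\<dots> \<le> max C 0" using that(2) by (simp add: mult_left_le)
    finally show ?thesis using C[OF that(1)] by linarith
  qed
  then show ?thesis by (intro bdd_aboveI) blast
qed

lemma zero_in_opnorm_set: "0 \<in> {hnorm (T x) | x. x \<in> S \<and> hnorm x \<le> 1}"
  by (intro CollectI exI[of _ 0]) (simp add: S_zero bounded_op_zero)

lemma opnorm_nonneg: "0 \<le> opnorm G S T"
  unfolding opnorm_def by (rule cSup_upper[OF zero_in_opnorm_set bdd_above_opnorm_set])

lemma opnorm_bound: assumes "x \<in> S" shows "hnorm (T x) \<le> opnorm G S T * hnorm x"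
proof (cases "x = 0")
  case False
  define r where "r = hnorm x"
  have r_pos: "r > 0" using False assms hnorm_pos r_def by blast
  define x' where "x' = sc (of_real (1 / r)) x"
  have "x' \<in> S" "hnorm x' = 1"
    using assms r_pos S_scale by (auto simp: x'_def hnorm_scale r_def norm_divide)
  then have "hnorm (T x') \<le> opnorm G S T"
    unfolding opnorm_def by (intro cSup_upper bdd_above_opnorm_set) auto
  moreover have "hnorm (T x') = hnorm (T x) / r"
    unfolding x'_def bounded_op_scale[OF assms] hnorm_scale using r_pos by (simp add: norm_divide)
  ultimately show ?thesis using r_pos by (simp add: r_def field_simps)
qed (simp add: bounded_op_zero)

lemma opnorm_least:
  assumes "K \<ge> 0" "\<And>x. x \<in> S \<Longrightarrow> hnorm (T x) \<le> K * hnorm x"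
  shows "opnorm G S T \<le> K"
  unfolding opnorm_def
proof (rule cSup_least)
  show "{hnorm (T x) | x. x \<in> S \<and> hnorm x \<le> 1} \<noteq> {}"
    using zero_in_opnorm_set by (metis empty_iff)
next
  fix a assume "a \<in> {hnorm (T x) | x. x \<in> S \<and> hnorm x \<le> 1}"
  then obtain x where x: "x \<in> S" "hnorm x \<le> 1" and a: "a = hnorm (T x)" by blast
  have "hnorm (T x) \<le> K * hnorm x" by (rule assms(2)[OF x(1)])
  also have "\<dots> \<le> K" using x(2) assms(1) by (rule mult_left_le)
  finally show "a \<le> K" unfolding a .
qed

lemma opnorm_pos:
  assumes "x \<in> S" "T x \<noteq> 0" shows "0 < opnorm G S T"
proof -
  have "0 < hnorm (T x)" using assms bounded_op_in hnorm_pos by blast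
  also have "\<dots> \<le> opnorm G S T * hnorm x" by (rule opnorm_bound[OF assms(1)])
  finally have pos: "0 < opnorm G S T * hnorm x" .
  show ?thesis
  proof (rule ccontr)
    assume "\<not> 0 < opnorm G S T"
    then have "opnorm G S T = 0" using opnorm_nonneg by linarith
    then show False using pos by simp
  qed
qed

lemma bounded_op_tendsto:
  assumes X: "\<And>k. X k \<in> S" and x: "x \<in> S" and lim: "(\<lambda>k. hnorm (X k - x)) \<longlonglongrightarrow> 0"
  shows "(\<lambda>k. hnorm (T (X k) - T x)) \<longlonglongrightarrow> 0"
proof (rule LIMSEQ_of_norm_diff_le_null[OF lim])
  fix k
  have Xx: "X k - x \<in> S" using S_diff[OF X x] .
  have "hnorm (T (X k) - T x) = hnorm (T (X k - x))" by (simp add: bounded_op_diff[OF X x])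
  also have "\<dots> \<le> opnorm G S T * hnorm (X k - x)" by (rule opnorm_bound[OF Xx])
  finally have "hnorm (T (X k) - T x) \<le> opnorm G S T * hnorm (X k - x)" .
  moreover have "0 \<le> hnorm (T (X k) - T x)" 
    by (rule hnorm_nonneg[OF S_diff[OF bounded_op_in[OF X] bounded_op_in[OF x]]])
  ultimately show "norm (hnorm (T (X k) - T x) - 0) \<le> opnorm G S T * hnorm (X k - x)" by simp
qed

end

lemma hnorm_limit_unique:
  assumes "\<And>k. X k \<in> S" "a \<in> S" "b \<in> S"
    and "(\<lambda>k. hnorm (X k - a)) \<longlonglongrightarrow> 0" "(\<lambda>k. hnorm (X k - b)) \<longlonglongrightarrow> 0"
  shows "a = b"
proof -
  have "hnorm (a - b) \<le> hnorm (X k - a) + hnorm (X k - b)" for k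
    using hnorm_triangle_diff[OF assms(2) assms(1)[of k] assms(3)] hnorm_minus_commute[of a "X k"] by simp
  moreover have "(\<lambda>k. hnorm (X k - a) + hnorm (X k - b)) \<longlonglongrightarrow> 0"
    using tendsto_add[OF assms(4,5)] by simp
  ultimately have "hnorm (a - b) \<le> 0" by (intro LIMSEQ_le_const) auto
  then have "hnorm (a - b) = 0" using hnorm_nonneg[OF S_diff[OF assms(2,3)]] by linarith
  then show ?thesis using hnorm_eq_0[OF S_diff[OF assms(2,3)]] by simp
qed

lemma hnorm_Cauchy_of_tail_bound:
  assumes b: "b \<longlonglongrightarrow> 0" and tail: "\<And>m n. m \<le> n \<Longrightarrow> hnorm (X n - X m) \<le> b m" and \<epsilon>: "\<epsilon> > 0"
  shows "\<exists>N. \<forall>m\<ge>N. \<forall>n\<ge>N. hnorm (X m - X n) < \<epsilon>"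
proof -
  obtain N where N: "\<And>m. m \<ge> N \<Longrightarrow> b m < \<epsilon>"
    using order_tendstoD(2)[OF b \<epsilon>] by (auto simp: eventually_sequentially)
  have "hnorm (X m - X n) < \<epsilon>" if "N \<le> m" "N \<le> n" for m n
  proof (cases "m \<le> n")
    case True
    then show ?thesis using tail[OF True] N[OF that(1)] hnorm_minus_commute[of "X m" "X n"] by simp
  next
    case False
    then show ?thesis using tail[of n m] N[OF that(2)] by simp
  qed
  then show ?thesis by blast
qed

lemma hnorm_partial_sums_diff_le:
  assumes "\<And>i. xs i \<in> S" "\<And>i. hnorm (xs i) \<le> c * (1/2)^i" "m \<le> n"
  shows "hnorm ((\<Sum>i<n. xs i) - (\<Sum>i<m. xs i)) \<le> 2 * c * (1/2)^m"
proof -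
  have "(\<Sum>i<n. xs i) = (\<Sum>i<m. xs i) + (\<Sum>i\<in>{m..<n}. xs i)"
    unfolding lessThan_atLeast0 using assms(3) by (simp add: sum.atLeastLessThan_concat)
  then have "(\<Sum>i<n. xs i) - (\<Sum>i<m. xs i) = (\<Sum>i\<in>{m..<n}. xs i)" by (simp add: algebra_simps)
  then have "hnorm ((\<Sum>i<n. xs i) - (\<Sum>i<m. xs i)) \<le> (\<Sum>i\<in>{m..<n}. hnorm (xs i))"
    using hnorm_sum_le[of "{m..<n}" xs] assms(1) by simp
  also have "\<dots> \<le> (\<Sum>i\<in>{m..<n}. c * (1/2)^i)" by (rule sum_mono) (rule assms(2))
  also have "\<dots> = c * (2 * (1/2)^m - 2 * (1/2)^n)"
    by (simp add: sum_distrib_left[symmetric] sum_half_powers[OF assms(3)])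
  also have "\<dots> \<le> c * (2 * (1/2)^m)"
    using assms(2)[of 0] hnorm_nonneg[OF assms(1)[of 0]] by (intro mult_left_mono) auto
  finally show ?thesis by (simp add: mult_ac)
qed

lemma hnorm_geometric_series:
  assumes xs: "\<And>i. xs i \<in> S" and bound: "\<And>i. hnorm (xs i) \<le> c * (1/2)^i"
  obtains x where "x \<in> S" "(\<lambda>m. hnorm ((\<Sum>i<m. xs i) - x)) \<longlonglongrightarrow> 0" "hnorm x \<le> 2 * c"
proof -
  define ps where "ps m = (\<Sum>i<m. xs i)" for m
  have ps: "ps m \<in> S" for m unfolding ps_def using xs by (rule S_sum)
  have c: "c \<ge> 0" using bound[of 0] hnorm_nonneg[OF xs[of 0]] by simp
  have ps_diff: "hnorm (ps n - ps m) \<le> 2 * c * (1/2)^m" if "m \<le> n" for m n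
    unfolding ps_def using xs bound that by (rule hnorm_partial_sums_diff_le)
  have "(\<lambda>m. 2 * c * (1/2::real)^m) \<longlonglongrightarrow> 0" by (intro tendsto_mult_right_zero LIMSEQ_power_zero) simp
  then have "\<exists>N. \<forall>m\<ge>N. \<forall>n\<ge>N. hnorm (ps m - ps n) < \<epsilon>" if "\<epsilon> > 0" for \<epsilon>
    by (rule hnorm_Cauchy_of_tail_bound[where X = ps, OF _ ps_diff that])
  with ps obtain x where x: "x \<in> S" and lim: "(\<lambda>m. hnorm (ps m - x)) \<longlonglongrightarrow> 0"
    by (rule hnorm_Cauchy_convergent)
  have "hnorm x \<le> 2 * c + hnorm (ps m - x)" for m
  proof -
    have "hnorm x \<le> hnorm (ps m) + hnorm (x - ps m)" using hnorm_triangle[OF ps[of m] S_diff[OF x ps[of m]]] by simp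
    moreover have "hnorm (ps m) \<le> 2 * c" using ps_diff[of 0 m] by (simp add: ps_def)
    ultimately show ?thesis using hnorm_minus_commute[of x "ps m"] by simp
  qed
  then have "hnorm x \<le> 2 * c"
    by (intro LIMSEQ_le_const[OF tendsto_add[OF tendsto_const lim, where a = "2 * c", simplified]]) auto
  then show thesis using that x lim unfolding ps_def by blast
qed

section \<open>The bounded inverse theorem\<close>

text \<open>The absolute value only matters off \<open>S\<close>, where \<open>hnorm\<close> may be negative.\<close>
definition hdist :: "'a \<Rightarrow> 'a \<Rightarrow> real" where "hdist x y = \<bar>hnorm (x - y)\<bar>"

lemma hdist_eq: "x \<in> S \<Longrightarrow> y \<in> S \<Longrightarrow> hdist x y = hnorm (x - y)"
  unfolding hdist_def using hnorm_nonneg[OF S_diff] by simp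

sublocale hmetric: Metric_space S hdist
proof
  show "0 \<le> hdist x y" for x y unfolding hdist_def by simp
  show "hdist x y = hdist y x" for x y unfolding hdist_def using hnorm_minus_commute by simp
  show "x \<in> S \<Longrightarrow> y \<in> S \<Longrightarrow> hdist x y = 0 \<longleftrightarrow> x = y" for x y
    using hdist_eq hnorm_eq_0 S_diff by simp
  show "x \<in> S \<Longrightarrow> y \<in> S \<Longrightarrow> z \<in> S \<Longrightarrow> hdist x z \<le> hdist x y + hdist y z" for x y z
    using hdist_eq hnorm_triangle_diff S_diff by simp
qed

lemma hmetric_mcomplete: "hmetric.mcomplete"
  unfolding hmetric.mcomplete_def
proof (intro allI impI)
  fix \<sigma> assume "hmetric.MCauchy \<sigma>"
  then have \<sigma>: "\<And>k. \<sigma> k \<in> S" and "\<And>\<epsilon>. \<epsilon> > 0 \<Longrightarrow> \<exists>N. \<forall>m\<ge>N. \<forall>n\<ge>N. hnorm (\<sigma> m - \<sigma> n) < \<epsilon>"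
    unfolding hmetric.MCauchy_def using hdist_eq by (auto, metis rangeI subsetD)
  then obtain x where x: "x \<in> S" and lim: "(\<lambda>k. hnorm (\<sigma> k - x)) \<longlonglongrightarrow> 0"
    by (rule hnorm_Cauchy_convergent)
  have "limitin hmetric.mtopology \<sigma> x sequentially"
    unfolding hmetric.limitin_metric
  proof (intro conjI allI impI)
    fix \<epsilon> :: real assume "\<epsilon> > 0"
    then have "\<forall>\<^sub>F k in sequentially. hnorm (\<sigma> k - x) < \<epsilon>" using order_tendstoD(2)[OF lim] by blast
    then show "\<forall>\<^sub>F k in sequentially. \<sigma> k \<in> S \<and> hdist (\<sigma> k) x < \<epsilon>"
      by eventually_elim (use \<sigma> x hdist_eq in auto)
  qed (rule x)
  then show "\<exists>x. limitin hmetric.mtopology \<sigma> x sequentially" by blast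
qed

context
  fixes U assumes U: "bounded_op U" and bij: "bij_betw U S S"
begin

text \<open>Baire category theorem: the closures of the images of the balls of radius \<open>k\<close> cover \<open>S\<close>,
  so one of them contains a ball.\<close>
lemma approximate_preimage_ball:
  obtains k r y0 where "k \<ge> 0" "r > 0" "y0 \<in> S"
    "\<And>y \<epsilon>. y \<in> S \<Longrightarrow> hnorm (y - y0) < r \<Longrightarrow> \<epsilon> > 0 \<Longrightarrow> \<exists>x\<in>S. hnorm x \<le> k \<and> hnorm (U x - y) < \<epsilon>"
proof -
  define C where "C k = hmetric.mtopology closure_of (U ` {x \<in> S. hnorm x \<le> real k})" for k
  have "\<exists>k. hmetric.mtopology interior_of C k \<noteq> {}"
  proof (rule ccontr)
    assume "\<not> ?thesis"
    then have "hmetric.mtopology interior_of \<Union>(range C) = {}"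
      by (intro hmetric.metric_Baire_category_alt hmetric_mcomplete) (auto simp: C_def)
    moreover have "S \<subseteq> \<Union>(range C)"
    proof
      fix y assume "y \<in> S"
      then obtain x where x: "x \<in> S" "y = U x" using bij unfolding bij_betw_def by blast
      obtain k :: nat where "hnorm x \<le> real k" using real_arch_simple by blast
      then have "y \<in> U ` {x \<in> S. hnorm x \<le> real k}" using x by blast
      then have "y \<in> C k"
        unfolding C_def using bounded_op_in[OF U] by (intro closure_of_subset[THEN subsetD]) auto
      then show "y \<in> \<Union>(range C)" by blast
    qed
    moreover have "\<Union>(range C) \<subseteq> S" unfolding C_def using closure_of_subset_topspace by fastforce
    ultimately have "hmetric.mtopology interior_of S = {}" by (metis subset_antisym)
    then show False using S_zero interior_of_topspace[of hmetric.mtopology] by simp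
  qed
  then obtain k y0 where y0: "y0 \<in> hmetric.mtopology interior_of C k" by blast
  then obtain r where r: "r > 0" "hmetric.mball y0 r \<subseteq> C k"
    using openin_interior_of hmetric.openin_mtopology interior_of_subset by (metis subset_trans)
  have y0_S: "y0 \<in> S" using y0 interior_of_subset_topspace by fastforce
  have approx: "\<exists>x\<in>S. hnorm x \<le> real k \<and> hnorm (U x - y) < \<epsilon>"
    if y: "y \<in> S" "hnorm (y - y0) < r" and \<epsilon>: "\<epsilon> > 0" for y \<epsilon>
  proof -
    have "y \<in> C k" using r(2) y y0_S hdist_eq hnorm_minus_commute by auto
    then obtain b where "b \<in> U ` {x \<in> S. hnorm x \<le> real k}" "b \<in> hmetric.mball y \<epsilon>"
      unfolding C_def hmetric.metric_closure_of using \<epsilon> by blast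
    then show ?thesis using y hdist_eq hnorm_minus_commute by auto
  qed
  show thesis by (rule that[of "real k" r y0]) (use r(1) y0_S approx in auto)
qed

lemma approximate_preimage_near_zero:
  obtains k r where "k \<ge> 0" "r > 0"
    "\<And>y \<epsilon>. y \<in> S \<Longrightarrow> hnorm y < r \<Longrightarrow> \<epsilon> > 0 \<Longrightarrow> \<exists>x\<in>S. hnorm x \<le> 2 * k \<and> hnorm (U x - y) < \<epsilon>"
proof (rule approximate_preimage_ball)
  fix k r y0 assume k: "k \<ge> 0" and r: "r > 0" and y0: "y0 \<in> S"
    and ball: "\<And>y \<epsilon>. y \<in> S \<Longrightarrow> hnorm (y - y0) < r \<Longrightarrow> \<epsilon> > 0 \<Longrightarrow> \<exists>x\<in>S. hnorm x \<le> k \<and> hnorm (U x - y) < \<epsilon>"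
  have "\<exists>x\<in>S. hnorm x \<le> 2 * k \<and> hnorm (U x - y) < \<epsilon>"
    if y: "y \<in> S" "hnorm y < r" and \<epsilon>: "\<epsilon> > 0" for y \<epsilon>
  proof -
    \<comment> \<open>\<open>y = (y0 + y) - y0\<close>, and both \<open>y0 + y\<close> and \<open>y0\<close> lie in the ball around \<open>y0\<close>\<close>
    have y0y: "y0 + y \<in> S" using S_add[OF y0 y(1)] .
    obtain x1 where x1: "x1 \<in> S" "hnorm x1 \<le> k" "hnorm (U x1 - (y0 + y)) < \<epsilon>/2"
      using ball[OF y0y _, of "\<epsilon>/2"] y \<epsilon> by auto
    obtain x2 where x2: "x2 \<in> S" "hnorm x2 \<le> k" "hnorm (U x2 - y0) < \<epsilon>/2"
      using ball[OF y0 _, of "\<epsilon>/2"] r \<epsilon> by auto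
    have eq: "U (x1 - x2) - y = (U x1 - (y0 + y)) - (U x2 - y0)"
      using bounded_op_diff[OF U x1(1) x2(1)] by (simp add: algebra_simps)
    have "hnorm (U (x1 - x2) - y) \<le> hnorm (U x1 - (y0 + y)) + hnorm (U x2 - y0)"
      unfolding eq
      by (rule hnorm_diff_le[OF S_diff[OF bounded_op_in[OF U x1(1)] y0y] S_diff[OF bounded_op_in[OF U x2(1)] y0]])
    moreover have "hnorm (x1 - x2) \<le> hnorm x1 + hnorm x2" using hnorm_diff_le x1(1) x2(1) by blast
    ultimately show ?thesis using x1 x2 S_diff[OF x1(1) x2(1)] by (intro bexI[of _ "x1 - x2"]) simp_all
  qed
  then show thesis using that[OF k r] by blast
qed

lemma approximate_preimage:
  obtains M where "M \<ge> 0"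
    "\<And>y \<epsilon>. y \<in> S \<Longrightarrow> \<epsilon> > 0 \<Longrightarrow> \<exists>x\<in>S. hnorm x \<le> M * hnorm y \<and> hnorm (y - U x) < \<epsilon>"
proof (rule approximate_preimage_near_zero)
  fix k r assume k: "k \<ge> 0" and r: "r > 0" and near0:
    "\<And>y \<epsilon>. y \<in> S \<Longrightarrow> hnorm y < r \<Longrightarrow> \<epsilon> > 0 \<Longrightarrow> \<exists>x\<in>S. hnorm x \<le> 2 * k \<and> hnorm (U x - y) < \<epsilon>"
  define M where "M = 4 * k / r"
  have "\<exists>x\<in>S. hnorm x \<le> M * hnorm y \<and> hnorm (y - U x) < \<epsilon>"
    if y: "y \<in> S" and \<epsilon>: "\<epsilon> > 0" for y \<epsilon>
  proof (cases "y = 0")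
    case True then show ?thesis using S_zero bounded_op_zero[OF U] \<epsilon> by (intro bexI[of _ 0]) auto
  next
    case False
    define t where "t = r / (2 * hnorm y)"
    have t: "t > 0" unfolding t_def using r hnorm_pos[OF y False] by simp
    have "hnorm (sc (of_real t) y) = t * hnorm y" using t by (simp add: hnorm_scale)
    also have "\<dots> < r" using r hnorm_pos[OF y False] by (simp add: t_def)
    finally have ty: "sc (of_real t) y \<in> S" "hnorm (sc (of_real t) y) < r" using S_scale[OF y] by auto
    obtain x' where x': "x' \<in> S" "hnorm x' \<le> 2 * k" "hnorm (U x' - sc (of_real t) y) < \<epsilon> * t"
      using near0[OF ty, of "\<epsilon> * t"] \<epsilon> t by auto
    define x where "x = sc (of_real (1 / t)) x'"
    have "hnorm x = hnorm x' / t" unfolding x_def hnorm_scale using t by (simp add: norm_divide)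
    also have "\<dots> \<le> 2 * k / t" using x'(2) t by (simp add: divide_right_mono)
    also have "\<dots> = M * hnorm y" unfolding t_def M_def using r hnorm_pos[OF y False] by (simp add: field_simps)
    finally have x_le: "hnorm x \<le> M * hnorm y" .
    have "y - U x = sc (of_real (1 / t)) (sc (of_real t) y - U x')"
      unfolding x_def bounded_op_scale[OF U x'(1)] scale_right_diff_distrib using t by simp
    then have "hnorm (y - U x) = hnorm (U x' - sc (of_real t) y) / t"
      using hnorm_minus_commute t by (simp add: hnorm_scale norm_divide)
    also have "\<dots> < \<epsilon>" using x'(3) t by (simp add: field_simps)
    finally show ?thesis using S_scale[OF x'(1)] x_le unfolding x_def by blast
  qed
  moreover have "M \<ge> 0" unfolding M_def using k r by simp
  ultimately show thesis using that by blast
qed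

end

context
  fixes U M assumes U: "bounded_op U" and M: "M \<ge> 0"
    and approx: "\<And>y \<epsilon>. y \<in> S \<Longrightarrow> \<epsilon> > 0 \<Longrightarrow> \<exists>x\<in>S. hnorm x \<le> M * hnorm y \<and> hnorm (y - U x) < \<epsilon>"
begin

lemma successive_approximation:
  assumes y: "y \<in> S" "y \<noteq> 0"
  obtains xs where "\<And>i. xs i \<in> S" "\<And>i. hnorm (xs i) \<le> M * hnorm y * (1/2)^i"
    "\<And>m. hnorm (y - U (\<Sum>i<m. xs i)) \<le> hnorm y * (1/2)^m"
proof -
  define \<eta> where "\<eta> = hnorm y"
  have \<eta>: "\<eta> > 0" unfolding \<eta>_def by (rule hnorm_pos[OF y])
  obtain ch where ch: "\<And>z \<epsilon>. z \<in> S \<Longrightarrow> \<epsilon> > 0 \<Longrightarrow>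
      ch z \<epsilon> \<in> S \<and> hnorm (ch z \<epsilon>) \<le> M * hnorm z \<and> hnorm (z - U (ch z \<epsilon>)) < \<epsilon>"
    using approx by metis
  \<comment> \<open>\<open>rs n\<close> is the residual \<open>y - U (xs 0 + \<dots> + xs (n - 1))\<close>\<close>
  define rs where "rs = rec_nat y (\<lambda>n z. z - U (ch z (\<eta> * (1/2)^Suc n)))"
  define xs where "xs n = ch (rs n) (\<eta> * (1/2)^Suc n)" for n
  have rs_Suc: "rs (Suc n) = rs n - U (xs n)" for n by (simp add: rs_def xs_def)
  have rs: "rs n \<in> S \<and> hnorm (rs n) \<le> \<eta> * (1/2)^n" for n
  proof (induction n)
    case 0 show ?case using y by (simp add: rs_def \<eta>_def)
  next
    case (Suc n)
    have "\<eta> * (1/2)^Suc n > 0" using \<eta> by simp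
    from ch[OF Suc[THEN conjunct1] this] have "xs n \<in> S" "hnorm (rs (Suc n)) < \<eta> * (1/2)^Suc n"
      unfolding rs_Suc xs_def by auto
    then show ?case using S_diff[OF Suc[THEN conjunct1] bounded_op_in[OF U]] rs_Suc by simp
  qed
  have xs: "xs n \<in> S" "hnorm (xs n) \<le> M * \<eta> * (1/2)^n" for n
  proof -
    have "\<eta> * (1/2)^Suc n > 0" using \<eta> by simp
    from ch[OF rs[of n, THEN conjunct1] this, folded xs_def]
    have "xs n \<in> S" "hnorm (xs n) \<le> M * hnorm (rs n)" by auto
    then show "xs n \<in> S" "hnorm (xs n) \<le> M * \<eta> * (1/2)^n"
      using mult_left_mono[OF rs[of n, THEN conjunct2] M] by (simp_all add: mult.assoc)
  qed
  have "U (\<Sum>i<m. xs i) = y - rs m" for m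
  proof (induction m)
    case 0 show ?case by (simp add: rs_def bounded_op_zero[OF U])
  next
    case (Suc m)
    have "(\<Sum>i<m. xs i) \<in> S" using xs(1) by (rule S_sum)
    then have "U (\<Sum>i<Suc m. xs i) = U (\<Sum>i<m. xs i) + U (xs m)"
      using bounded_op_add[OF U _ xs(1)[of m]] by simp
    also have "\<dots> = y - rs (Suc m)" using Suc.IH rs_Suc[of m] by simp
    finally show ?case .
  qed
  then have "hnorm (y - U (\<Sum>i<m. xs i)) \<le> \<eta> * (1/2)^m" for m using rs by simp
  then show thesis using that xs unfolding \<eta>_def by blast
qed

lemma exact_preimage:
  assumes y: "y \<in> S"
  obtains x where "x \<in> S" "U x = y" "hnorm x \<le> 2 * M * hnorm y"
proof (cases "y = 0")
  case True then show thesis using that S_zero bounded_op_zero[OF U] by simp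
next
  case False
  obtain xs where xs: "\<And>i. xs i \<in> S" "\<And>i. hnorm (xs i) \<le> M * hnorm y * (1/2)^i"
    and res: "\<And>m. hnorm (y - U (\<Sum>i<m. xs i)) \<le> hnorm y * (1/2)^m"
    using successive_approximation[OF y False] by blast
  obtain x where x: "x \<in> S" and lim: "(\<lambda>m. hnorm ((\<Sum>i<m. xs i) - x)) \<longlonglongrightarrow> 0"
    and x_le: "hnorm x \<le> 2 * (M * hnorm y)"
    by (rule hnorm_geometric_series[OF xs])
  have ps: "(\<Sum>i<m. xs i) \<in> S" for m using xs(1) by (rule S_sum)
  have "(\<lambda>m. hnorm (U (\<Sum>i<m. xs i) - U x)) \<longlonglongrightarrow> 0" by (rule bounded_op_tendsto[OF U ps x lim])
  moreover have "(\<lambda>m. hnorm (U (\<Sum>i<m. xs i) - y)) \<longlonglongrightarrow> 0"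
  proof (rule LIMSEQ_of_norm_diff_le_null[of "\<lambda>m. (1/2::real)^m" _ _ "hnorm y"])
    show "(\<lambda>m. (1/2::real)^m) \<longlonglongrightarrow> 0" by (rule LIMSEQ_power_zero) simp
    fix m
    have "hnorm (U (\<Sum>i<m. xs i) - y) = hnorm (y - U (\<Sum>i<m. xs i))" by (rule hnorm_minus_commute)
    with res[of m] hnorm_nonneg[OF S_diff[OF y bounded_op_in[OF U ps]]]
    show "norm (hnorm (U (\<Sum>i<m. xs i) - y) - 0) \<le> hnorm y * (1/2)^m" by simp
  qed
  ultimately have "U x = y"
    using hnorm_limit_unique[of "\<lambda>m. U (\<Sum>i<m. xs i)", OF bounded_op_in[OF U ps] bounded_op_in[OF U x] y]
    by blast
  then show thesis using that x x_le by simp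
qed

end

lemma bounded_op_inv_into:
  assumes U: "bounded_op U" and bij: "bij_betw U S S"
  shows "bounded_op (inv_into S U)"
proof -
  obtain M where M: "M \<ge> 0"
    and approx: "\<And>y \<epsilon>. y \<in> S \<Longrightarrow> \<epsilon> > 0 \<Longrightarrow> \<exists>x\<in>S. hnorm x \<le> M * hnorm y \<and> hnorm (y - U x) < \<epsilon>"
    using approximate_preimage[OF U bij] by blast
  have inj: "inj_on U S" and onto: "U ` S = S" using bij by (auto simp: bij_betw_def)
  have W: "inv_into S U y \<in> S" "U (inv_into S U y) = y" if "y \<in> S" for y
    using that onto by (metis inv_into_into, metis f_inv_into_f)
  show ?thesis
  proof (rule bounded_opI[of _ "2 * M"])
    fix y assume y: "y \<in> S"
    obtain x where x: "x \<in> S" "U x = y" "hnorm x \<le> 2 * M * hnorm y"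
      by (rule exact_preimage[OF U M approx y])
    then show "hnorm (inv_into S U y) \<le> 2 * M * hnorm y" using inv_into_f_eq[OF inj] by simp
  next
    fix x y assume "x \<in> S" "y \<in> S"
    then show "inv_into S U (x + y) = inv_into S U x + inv_into S U y"
      using W S_add bounded_op_add[OF U] by (intro inv_into_f_eq[OF inj]) auto
  next
    fix c x assume "x \<in> S"
    then show "inv_into S U (sc c x) = sc c (inv_into S U x)"
      using W S_scale bounded_op_scale[OF U] by (intro inv_into_f_eq[OF inj]) auto
  qed (rule W(1))
qed

section \<open>Optimal bounds for an invertible operator\<close>

context
  fixes V W
  assumes V: "bounded_op V" and W: "bounded_op W"
    and VW: "\<And>x. x \<in> S \<Longrightarrow> V (W x) = x" and WV: "\<And>x. x \<in> S \<Longrightarrow> W (V x) = x"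
    and nontrivial: "S \<noteq> {0}"
begin

lemma opnorm_pos_if_inverse: "0 < opnorm G S V" "0 < opnorm G S W"
proof -
  obtain x where x: "x \<in> S" "x \<noteq> 0" using nontrivial S_zero by blast
  show "0 < opnorm G S V" using VW[OF x(1)] x by (intro opnorm_pos[OF V bounded_op_in[OF W x(1)]]) simp
  show "0 < opnorm G S W" using WV[OF x(1)] x by (intro opnorm_pos[OF W bounded_op_in[OF V x(1)]]) simp
qed

lemma hnorm_square_bounds_by_opnorms:
  assumes x: "x \<in> S"
  shows "1 / (opnorm G S W)\<^sup>2 * (hnorm x)\<^sup>2 \<le> (hnorm (V x))\<^sup>2"
    and "(hnorm (V x))\<^sup>2 \<le> (opnorm G S V)\<^sup>2 * (hnorm x)\<^sup>2"
proof -
  have "hnorm x \<le> opnorm G S W * hnorm (V x)" using opnorm_bound[OF W bounded_op_in[OF V x]] WV[OF x] by simp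
  then have "(hnorm x)\<^sup>2 \<le> (opnorm G S W)\<^sup>2 * (hnorm (V x))\<^sup>2"
    using hnorm_nonneg[OF x] by (metis power_mono power_mult_distrib)
  then show "1 / (opnorm G S W)\<^sup>2 * (hnorm x)\<^sup>2 \<le> (hnorm (V x))\<^sup>2"
    using opnorm_pos_if_inverse(2) by (simp add: field_simps)
  show "(hnorm (V x))\<^sup>2 \<le> (opnorm G S V)\<^sup>2 * (hnorm x)\<^sup>2"
    using opnorm_bound[OF V x] hnorm_nonneg[OF bounded_op_in[OF V x]] by (metis power_mono power_mult_distrib)
qed

lemma lower_bound_le_inverse_opnorm:
  assumes A: "A > 0" and lower: "\<And>x. x \<in> S \<Longrightarrow> A * (hnorm x)\<^sup>2 \<le> (hnorm (V x))\<^sup>2"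
  shows "A \<le> 1 / (opnorm G S W)\<^sup>2"
proof -
  have "hnorm (W y) \<le> (1 / sqrt A) * hnorm y" if y: "y \<in> S" for y
  proof -
    have "A * (hnorm (W y))\<^sup>2 \<le> (hnorm y)\<^sup>2" using lower[OF bounded_op_in[OF W y]] VW[OF y] by simp
    then have "sqrt A * hnorm (W y) \<le> hnorm y"
      using hnorm_nonneg[OF y] hnorm_nonneg[OF bounded_op_in[OF W y]] A
      by (metis real_sqrt_le_mono real_sqrt_abs real_sqrt_mult abs_of_nonneg)
    then show ?thesis using A by (simp add: field_simps)
  qed
  then have "opnorm G S W \<le> 1 / sqrt A" using A by (intro opnorm_least[OF W]) auto
  then have "(opnorm G S W)\<^sup>2 \<le> 1 / A"
    using opnorm_nonneg[OF W] A by (metis power_mono real_sqrt_pow2 less_imp_le power_one_over)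
  then show ?thesis using A opnorm_pos_if_inverse(2) by (simp add: field_simps)
qed

lemma opnorm_square_le_upper_bound:
  assumes B: "B > 0" and upper: "\<And>x. x \<in> S \<Longrightarrow> (hnorm (V x))\<^sup>2 \<le> B * (hnorm x)\<^sup>2"
  shows "(opnorm G S V)\<^sup>2 \<le> B"
proof -
  have "hnorm (V x) \<le> sqrt B * hnorm x" if x: "x \<in> S" for x
    using upper[OF x] hnorm_nonneg[OF x] B
    by (metis real_sqrt_le_mono real_sqrt_abs real_sqrt_mult abs_of_nonneg hnorm_nonneg bounded_op_in[OF V x])
  then have "opnorm G S V \<le> sqrt B" using B by (intro opnorm_least[OF V]) auto
  then show ?thesis using opnorm_nonneg[OF V] B by (metis power_mono real_sqrt_pow2 less_imp_le)
qed

end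

end

section \<open>Orthonormal bases\<close>

locale hilbert_onb = hilbert_subspace +
  fixes I :: "'i set" and e :: "'i \<Rightarrow> 'a"
  assumes onb: "onb G S I e"
begin

lemma e_in_S: "n \<in> I \<Longrightarrow> e n \<in> S"
  using onb unfolding onb_def by simp
lemma form_e_e: "n \<in> I \<Longrightarrow> m \<in> I \<Longrightarrow> G (e n) (e m) = (if n = m then 1 else 0)"
  using onb unfolding onb_def by simp
lemma orthogonal_e_imp_zero: "x \<in> S \<Longrightarrow> (\<And>n. n \<in> I \<Longrightarrow> G x (e n) = 0) \<Longrightarrow> x = 0"
  using onb unfolding onb_def by simp

definition lincomb :: "'i set \<Rightarrow> ('i \<Rightarrow> complex) \<Rightarrow> 'a" where
  "lincomb F d = (\<Sum>n\<in>F. sc (d n) (e n))"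

lemma lincomb_in_S: "F \<subseteq> I \<Longrightarrow> lincomb F d \<in> S"
  unfolding lincomb_def by (intro S_sum S_scale e_in_S) blast

lemma form_lincomb_left: "G (lincomb F d) y = (\<Sum>n\<in>F. d n * G (e n) y)"
  unfolding lincomb_def form_sum_left form_scale_left ..

lemma form_lincomb_right: "G y (lincomb F d) = (\<Sum>n\<in>F. cnj (d n) * G y (e n))"
  unfolding lincomb_def form_sum_right form_scale_right ..

lemma form_lincomb_e:
  assumes "finite F" "F \<subseteq> I" "m \<in> I"
  shows "G (lincomb F d) (e m) = (if m \<in> F then d m else 0)"
proof -
  have "G (lincomb F d) (e m) = (\<Sum>n\<in>F. if n = m then d n else 0)"
    unfolding form_lincomb_left by (rule sum.cong) (use assms form_e_e in auto)
  also have "\<dots> = (if m \<in> F then d m else 0)" using assms(1) by (simp add: sum.delta')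
  finally show ?thesis .
qed

lemma hnorm_lincomb_square:
  assumes "finite F" "F \<subseteq> I"
  shows "(hnorm (lincomb F d))\<^sup>2 = (\<Sum>n\<in>F. (cmod (d n))\<^sup>2)"
proof -
  have "G (lincomb F d) (lincomb F d) = (\<Sum>n\<in>F. of_real ((cmod (d n))\<^sup>2))"
    unfolding form_lincomb_right
  proof (rule sum.cong[OF refl])
    fix n assume "n \<in> F"
    then have "G (lincomb F d) (e n) = d n" using form_lincomb_e[OF assms subsetD[OF assms(2)]] by simp
    then show "cnj (d n) * G (lincomb F d) (e n) = of_real ((cmod (d n))\<^sup>2)"
      by (simp add: cmod_square_eq_cnj_mult)
  qed
  then show ?thesis using hnorm_square[OF lincomb_in_S[OF assms(2)]] by simp
qed

lemma lincomb_diff: "finite F' \<Longrightarrow> F \<subseteq> F' \<Longrightarrow> lincomb F' d - lincomb F d = lincomb (F' - F) d"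
  unfolding lincomb_def by (simp add: sum_diff finite_subset)

lemma Bessel_finite:
  assumes y: "y \<in> S" and F: "finite F" "F \<subseteq> I"
  shows "(\<Sum>n\<in>F. (cmod (G y (e n)))\<^sup>2) \<le> (hnorm y)\<^sup>2"
proof -
  \<comment> \<open>the orthogonal projection of \<open>y\<close> onto the span of the \<open>e n\<close>, \<open>n \<in> F\<close>\<close>
  define v where "v = lincomb F (\<lambda>n. G y (e n))"
  define s where "s = (\<Sum>n\<in>F. (cmod (G y (e n)))\<^sup>2)"
  have v: "v \<in> S" unfolding v_def using lincomb_in_S F by blast
  have "G v v = of_real ((hnorm v)\<^sup>2)" by (rule form_self[OF v])
  then have vv: "G v v = of_real s" using hnorm_lincomb_square[OF F] by (simp add: v_def s_def)
  have "G v y = (\<Sum>n\<in>F. of_real ((cmod (G y (e n)))\<^sup>2))"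
    unfolding v_def form_lincomb_left by (rule sum.cong) (auto simp: cmod_square_eq_mult_cnj simp flip: form_cnj)
  then have vy: "G v y = of_real s" by (simp add: s_def)
  then have yv: "G y v = of_real s" using form_cnj[of y v] by simp
  have "G (y - v) (y - v) = G y y - of_real s"
    by (simp add: form_diff_left form_diff_right vv vy yv)
  then have "0 \<le> Re (G y y) - s" using form_self_nonneg[OF S_diff[OF y v]] by simp
  then show ?thesis using hnorm_square[OF y] by (simp add: s_def)
qed

lemma Bessel_summable: "y \<in> S \<Longrightarrow> (\<lambda>n. (cmod (G y (e n)))\<^sup>2) summable_on I"
  by (rule nonneg_bdd_above_summable_on) (auto intro!: bdd_aboveI[where M = "(hnorm y)\<^sup>2"] Bessel_finite)

lemma Bessel_inequality: "y \<in> S \<Longrightarrow> (\<Sum>\<^sub>\<infinity>n\<in>I. (cmod (G y (e n)))\<^sup>2) \<le> (hnorm y)\<^sup>2"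
  by (rule infsum_le_finite_sums) (auto intro: Bessel_summable Bessel_finite)

lemma lincomb_Cauchy_sequence:
  assumes "(\<lambda>n. (cmod (d n))\<^sup>2) summable_on I"
  obtains F where "\<And>k. finite (F k)" "\<And>k. F k \<subseteq> I" "incseq F"
    "\<And>n. n \<in> I \<Longrightarrow> d n \<noteq> 0 \<Longrightarrow> \<exists>k. n \<in> F k"
    "\<And>\<epsilon>. \<epsilon> > 0 \<Longrightarrow> \<exists>N. \<forall>m\<ge>N. \<forall>n\<ge>N. hnorm (lincomb (F m) d - lincomb (F n) d) < \<epsilon>"
proof (rule summable_on_tail_sets[of "\<lambda>n. (cmod (d n))\<^sup>2", OF assms])
  fix F assume F: "\<And>k. finite (F k)" "\<And>k. F k \<subseteq> I" "incseq F"
    and tail: "\<And>k H. finite H \<Longrightarrow> H \<subseteq> I - F k \<Longrightarrow> (\<Sum>n\<in>H. (cmod (d n))\<^sup>2) \<le> 1 / real (Suc k)"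
    and supp: "\<And>n. n \<in> I \<Longrightarrow> (cmod (d n))\<^sup>2 > 0 \<Longrightarrow> \<exists>k. n \<in> F k"
  define s where "s k = lincomb (F k) d" for k
  have s_diff: "(hnorm (s k' - s k))\<^sup>2 \<le> 1 / real (Suc k)" if "k \<le> k'" for k k'
  proof -
    have "F k \<subseteq> F k'" using F(3) that by (simp add: incseq_def)
    then have "s k' - s k = lincomb (F k' - F k) d" unfolding s_def by (rule lincomb_diff[OF F(1)])
    moreover have "F k' - F k \<subseteq> I" using F(2) by blast
    ultimately have "(hnorm (s k' - s k))\<^sup>2 = (\<Sum>n\<in>F k' - F k. (cmod (d n))\<^sup>2)"
      using hnorm_lincomb_square[OF finite_Diff[OF F(1)]] by simp
    also have "\<dots> \<le> 1 / real (Suc k)" using F(1,2) by (intro tail) auto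
    finally show ?thesis .
  qed
  have "(\<lambda>k. sqrt (inverse (real (Suc k)))) \<longlonglongrightarrow> 0"
    using tendsto_real_sqrt[OF LIMSEQ_inverse_real_of_nat] by simp
  moreover have "hnorm (s k' - s k) \<le> sqrt (inverse (real (Suc k)))" if "k \<le> k'" for k k'
    using s_diff[OF that] by (simp add: real_le_rsqrt inverse_eq_divide)
  ultimately have Cauchy: "\<exists>N. \<forall>m\<ge>N. \<forall>n\<ge>N. hnorm (s m - s n) < \<epsilon>" if "\<epsilon> > 0" for \<epsilon>
    by (rule hnorm_Cauchy_of_tail_bound[OF _ _ that])
  have "\<exists>k. n \<in> F k" if "n \<in> I" "d n \<noteq> 0" for n using supp that by simp
  then show thesis using Cauchy unfolding s_def by (rule that[OF F])
qed simp

lemma Riesz_Fischer: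
  assumes "(\<lambda>n. (cmod (d n))\<^sup>2) summable_on I"
  obtains F z where "z \<in> S" "\<And>k. finite (F k)" "\<And>k. F k \<subseteq> I"
    "(\<lambda>k. hnorm (lincomb (F k) d - z)) \<longlonglongrightarrow> 0" "\<And>n. n \<in> I \<Longrightarrow> G z (e n) = d n"
proof (rule lincomb_Cauchy_sequence[OF assms])
  fix F assume F: "\<And>k. finite (F k)" "\<And>k. F k \<subseteq> I" "incseq F"
    and supp: "\<And>n. n \<in> I \<Longrightarrow> d n \<noteq> 0 \<Longrightarrow> \<exists>k. n \<in> F k"
    and Cauchy: "\<And>\<epsilon>. \<epsilon> > 0 \<Longrightarrow> \<exists>N. \<forall>m\<ge>N. \<forall>n\<ge>N. hnorm (lincomb (F m) d - lincomb (F n) d) < \<epsilon>"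
  have s: "lincomb (F k) d \<in> S" for k by (rule lincomb_in_S[OF F(2)])
  obtain z where z: "z \<in> S" and lim: "(\<lambda>k. hnorm (lincomb (F k) d - z)) \<longlonglongrightarrow> 0"
    using s Cauchy by (rule hnorm_Cauchy_convergent)
  have coeff: "G z (e n) = d n" if n: "n \<in> I" for n
  proof -
    have eq: "G (lincomb (F k) d) (e n) = (if n \<in> F k then d n else 0)" for k
      by (rule form_lincomb_e[OF F(1,2) n])
    have "\<forall>\<^sub>F k in sequentially. G (lincomb (F k) d) (e n) = d n"
    proof (cases "d n = 0")
      case False
      then obtain k0 where "n \<in> F k0" using supp[OF n] by blast
      then have "G (lincomb (F k) d) (e n) = d n" if "k0 \<le> k" for k
        using eq[of k] monoD[OF F(3) that] by auto
      then show ?thesis by (rule eventually_sequentiallyI)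
    qed (simp add: eq)
    then have "(\<lambda>k. G (lincomb (F k) d) (e n)) \<longlonglongrightarrow> d n" by (rule tendsto_eventually)
    moreover have "(\<lambda>k. G (lincomb (F k) d) (e n)) \<longlonglongrightarrow> G z (e n)"
      by (rule form_tendsto_left[OF s z e_in_S[OF n] lim])
    ultimately show ?thesis using LIMSEQ_unique by blast
  qed
  show thesis by (rule that[OF z F(1,2) lim coeff])
qed

lemma orthonormal_expansion:
  assumes y: "y \<in> S"
  obtains F where "\<And>k. finite (F k)" "\<And>k. F k \<subseteq> I"
    "(\<lambda>k. hnorm (lincomb (F k) (\<lambda>n. G y (e n)) - y)) \<longlonglongrightarrow> 0"
proof (rule Riesz_Fischer[OF Bessel_summable[OF y]])
  fix F z assume z: "z \<in> S" and F: "\<And>k. finite (F k)" "\<And>k. F k \<subseteq> I"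
    and lim: "(\<lambda>k. hnorm (lincomb (F k) (\<lambda>n. G y (e n)) - z)) \<longlonglongrightarrow> 0"
    and coeff: "\<And>n. n \<in> I \<Longrightarrow> G z (e n) = G y (e n)"
  have "z - y = 0" using coeff by (intro orthogonal_e_imp_zero[OF S_diff[OF z y]]) (simp add: form_diff_left)
  then show thesis using that[OF F] lim by simp
qed

lemma Parseval_identity:
  assumes y: "y \<in> S"
  shows "(\<Sum>\<^sub>\<infinity>n\<in>I. (cmod (G y (e n)))\<^sup>2) = (hnorm y)\<^sup>2"
proof (rule antisym[OF Bessel_inequality[OF y]])
  define \<Sigma> where "\<Sigma> = (\<Sum>\<^sub>\<infinity>n\<in>I. (cmod (G y (e n)))\<^sup>2)"
  obtain F where F: "\<And>k. finite (F k)" "\<And>k. F k \<subseteq> I"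
    and lim: "(\<lambda>k. hnorm (lincomb (F k) (\<lambda>n. G y (e n)) - y)) \<longlonglongrightarrow> 0"
    by (rule orthonormal_expansion[OF y]) auto
  have "hnorm y \<le> sqrt \<Sigma> + hnorm (lincomb (F k) (\<lambda>n. G y (e n)) - y)" for k
  proof -
    define v where "v = lincomb (F k) (\<lambda>n. G y (e n))"
    have v: "v \<in> S" unfolding v_def by (rule lincomb_in_S[OF F(2)])
    have "(hnorm v)\<^sup>2 \<le> \<Sigma>" unfolding v_def hnorm_lincomb_square[OF F(1,2)] \<Sigma>_def
      using Bessel_summable[OF y] F by (intro finite_sum_le_infsum) auto
    then have "hnorm v \<le> sqrt \<Sigma>" using hnorm_nonneg[OF v] real_le_rsqrt by blast
    moreover have "hnorm y \<le> hnorm v + hnorm (v - y)"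
      using hnorm_triangle[OF v S_diff[OF y v]] hnorm_minus_commute[of y v] by simp
    ultimately show ?thesis unfolding v_def by linarith
  qed
  then have "hnorm y \<le> sqrt \<Sigma>"
    by (intro LIMSEQ_le_const[OF tendsto_add[OF tendsto_const lim, where a = "sqrt \<Sigma>", simplified]]) auto
  then show "(hnorm y)\<^sup>2 \<le> \<Sigma>" using hnorm_nonneg[OF y] by (metis real_sqrt_le_iff real_sqrt_unique)
qed

section \<open>Adjoints\<close>

context
  fixes \<phi> :: "'a \<Rightarrow> complex" and C :: real
  assumes \<phi>_add: "\<And>x y. x \<in> S \<Longrightarrow> y \<in> S \<Longrightarrow> \<phi> (x + y) = \<phi> x + \<phi> y"
    and \<phi>_scale: "\<And>c x. x \<in> S \<Longrightarrow> \<phi> (sc c x) = c * \<phi> x"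
    and \<phi>_bound: "\<And>x. x \<in> S \<Longrightarrow> cmod (\<phi> x) \<le> C * hnorm x"
begin

lemma functional_zero: "\<phi> 0 = 0"
  using \<phi>_add[OF S_zero S_zero] by simp

lemma functional_lincomb: "F \<subseteq> I \<Longrightarrow> \<phi> (lincomb F a) = (\<Sum>n\<in>F. a n * \<phi> (e n))"
proof (induction F rule: infinite_finite_induct)
  case (insert n F)
  have "lincomb (insert n F) a = sc (a n) (e n) + lincomb F a" using insert(1,2) by (simp add: lincomb_def)
  moreover have "sc (a n) (e n) \<in> S" "lincomb F a \<in> S" using insert(4) S_scale e_in_S lincomb_in_S by auto
  ultimately show ?case using insert \<phi>_add \<phi>_scale e_in_S by simp
qed (simp_all add: lincomb_def functional_zero)

lemma functional_coeffs_summable: "(\<lambda>n. (cmod (\<phi> (e n)))\<^sup>2) summable_on I"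
proof (rule nonneg_bdd_above_summable_on)
  have "(\<Sum>n\<in>F. (cmod (\<phi> (e n)))\<^sup>2) \<le> C\<^sup>2" if F: "finite F" "F \<subseteq> I" for F
  proof -
    define s where "s = (\<Sum>n\<in>F. (cmod (\<phi> (e n)))\<^sup>2)"
    have s: "0 \<le> s" unfolding s_def by (simp add: sum_nonneg)
    define v where "v = lincomb F (\<lambda>n. cnj (\<phi> (e n)))"
    have v: "v \<in> S" unfolding v_def by (rule lincomb_in_S[OF F(2)])
    have "\<phi> v = of_real s"
      unfolding v_def functional_lincomb[OF F(2)] s_def by (simp add: cmod_square_eq_cnj_mult)
    moreover have "(hnorm v)\<^sup>2 = s" using hnorm_lincomb_square[OF F] unfolding v_def s_def by simp
    then have "hnorm v = sqrt s" using hnorm_nonneg[OF v] by (intro real_sqrt_unique[symmetric])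
    ultimately have le: "s \<le> C * sqrt s" using \<phi>_bound[OF v] s by simp
    show ?thesis
    proof (cases "s = 0")
      case False
      then have pos: "sqrt s > 0" using s by simp
      have "sqrt s * sqrt s \<le> C * sqrt s" using le s by simp
      then have "sqrt s \<le> C" using pos by (rule mult_right_le_imp_le)
      then have "(sqrt s)\<^sup>2 \<le> C\<^sup>2" using s by (intro power_mono) simp_all
      then show ?thesis using s by (simp add: s_def)
    qed (simp add: s_def)
  qed
  then show "bdd_above (sum (\<lambda>n. (cmod (\<phi> (e n)))\<^sup>2) ` {F. F \<subseteq> I \<and> finite F})"
    by (intro bdd_aboveI) auto
qed simp

lemma Riesz_representation:
  obtains z where "z \<in> S" "\<And>x. x \<in> S \<Longrightarrow> \<phi> x = G x z"
  \<comment> \<open>\<open>z\<close> is the sum of the series \<open>\<Sum>n. cnj (\<phi> (e n)) e n\<close>\<close>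
proof (rule Riesz_Fischer[of "\<lambda>n. cnj (\<phi> (e n))"])
  show "(\<lambda>n. (cmod (cnj (\<phi> (e n))))\<^sup>2) summable_on I" using functional_coeffs_summable by simp
next
  fix F0 z assume z: "z \<in> S" and coeff: "\<And>n. n \<in> I \<Longrightarrow> G z (e n) = cnj (\<phi> (e n))"
  have "\<phi> x = G x z" if x: "x \<in> S" for x
  proof (rule orthonormal_expansion[OF x])
    fix F assume F: "\<And>k. finite (F k)" "\<And>k. F k \<subseteq> I"
      and lim: "(\<lambda>k. hnorm (lincomb (F k) (\<lambda>n. G x (e n)) - x)) \<longlonglongrightarrow> 0"
    define xs where "xs k = lincomb (F k) (\<lambda>n. G x (e n))" for k
    have xs: "xs k \<in> S" for k unfolding xs_def by (rule lincomb_in_S[OF F(2)])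
    have eq: "\<phi> (xs k) = G (xs k) z" for k
      unfolding xs_def functional_lincomb[OF F(2)] form_lincomb_left
    proof (rule sum.cong[OF refl])
      fix n assume "n \<in> F k"
      then have "G (e n) z = \<phi> (e n)" using coeff[of n] F(2) form_cnj[of z "e n"] by auto
      then show "G x (e n) * \<phi> (e n) = G x (e n) * G (e n) z" by simp
    qed
    have "(\<lambda>k. \<phi> (xs k)) \<longlonglongrightarrow> \<phi> x"
    proof (rule LIMSEQ_of_norm_diff_le_null[OF lim[folded xs_def], of _ _ C])
      fix k
      have "\<phi> (xs k) - \<phi> x = \<phi> (xs k - x)" using \<phi>_add[OF S_diff[OF xs x] x] by simp
      then show "cmod (\<phi> (xs k) - \<phi> x) \<le> C * hnorm (xs k - x)" using \<phi>_bound[OF S_diff[OF xs x]] by simp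
    qed
    moreover have "(\<lambda>k. G (xs k) z) \<longlonglongrightarrow> G x z" by (rule form_tendsto_left[OF xs x z lim[folded xs_def]])
    ultimately show ?thesis unfolding eq using LIMSEQ_unique by blast
  qed
  then show thesis using that z by blast
qed

end

definition adjoint :: "('a \<Rightarrow> 'a) \<Rightarrow> 'a \<Rightarrow> 'a" where
  "adjoint T u = (THE z. z \<in> S \<and> (\<forall>v\<in>S. G (T v) u = G v z))"

context
  fixes T assumes T: "bounded_op T"
begin

lemma adjoint_unique:
  assumes "u \<in> S" "z \<in> S" "\<And>v. v \<in> S \<Longrightarrow> G (T v) u = G v z"
  shows "adjoint T u = z"
  unfolding adjoint_def
proof (rule the_equality)
  fix z' assume "z' \<in> S \<and> (\<forall>v\<in>S. G (T v) u = G v z')"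
  then show "z' = z" using assms by (intro form_eq_imp_eq) auto
qed (use assms in blast)

lemma adjoint_in_S_and_form:
  assumes u: "u \<in> S"
  shows "adjoint T u \<in> S \<and> (\<forall>v\<in>S. G (T v) u = G v (adjoint T u))"
proof -
  have add: "G (T (x + y)) u = G (T x) u + G (T y) u" if "x \<in> S" "y \<in> S" for x y
    using bounded_op_add[OF T that] by (simp add: form_add_left)
  have scale: "G (T (sc c x)) u = c * G (T x) u" if "x \<in> S" for c x
    using bounded_op_scale[OF T that] by (simp add: form_scale_left)
  have bound: "cmod (G (T v) u) \<le> (opnorm G S T * hnorm u) * hnorm v" if "v \<in> S" for v
  proof -
    have "cmod (G (T v) u) \<le> hnorm (T v) * hnorm u"
      by (rule form_Cauchy_Schwarz[OF bounded_op_in[OF T that] u])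
    also have "\<dots> \<le> opnorm G S T * hnorm v * hnorm u"
      using opnorm_bound[OF T that] hnorm_nonneg[OF u] by (rule mult_right_mono)
    finally show ?thesis by (simp add: mult_ac)
  qed
  show ?thesis
  proof (rule Riesz_representation[of "\<lambda>v. G (T v) u", OF add scale bound])
    fix z assume z: "z \<in> S" "\<And>v. v \<in> S \<Longrightarrow> G (T v) u = G v z"
    then show ?thesis using adjoint_unique[OF u z] by simp
  qed
qed

lemma adjoint_in_S: "u \<in> S \<Longrightarrow> adjoint T u \<in> S"
  using adjoint_in_S_and_form by (rule conjunct1)

lemma form_adjoint: "u \<in> S \<Longrightarrow> v \<in> S \<Longrightarrow> G (T v) u = G v (adjoint T u)"
  using adjoint_in_S_and_form by (rule conjunct2[THEN bspec])

lemma hnorm_adjoint_le: assumes u: "u \<in> S" shows "hnorm (adjoint T u) \<le> opnorm G S T * hnorm u"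
proof -
  have w: "adjoint T u \<in> S" by (rule adjoint_in_S[OF u])
  have "(hnorm (adjoint T u))\<^sup>2 = cmod (G (adjoint T u) (adjoint T u))" by (rule hnorm_square_cmod[OF w])
  also have "G (adjoint T u) (adjoint T u) = G (T (adjoint T u)) u" by (rule form_adjoint[OF u w, symmetric])
  also have "cmod \<dots> \<le> hnorm (T (adjoint T u)) * hnorm u"
    by (rule form_Cauchy_Schwarz[OF bounded_op_in[OF T w] u])
  also have "\<dots> \<le> opnorm G S T * hnorm (adjoint T u) * hnorm u"
    using opnorm_bound[OF T w] hnorm_nonneg[OF u] by (rule mult_right_mono)
  finally have "(hnorm (adjoint T u))\<^sup>2 \<le> (opnorm G S T * hnorm u) * hnorm (adjoint T u)"
    by (simp add: mult_ac)
  then show ?thesis by (rule power2_le_mult_imp_le) (simp add: opnorm_nonneg[OF T] hnorm_nonneg[OF u])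
qed

lemma bounded_op_adjoint: "bounded_op (adjoint T)"
proof (rule bounded_opI)
  fix u v assume u: "u \<in> S" and v: "v \<in> S"
  show "adjoint T (u + v) = adjoint T u + adjoint T v"
    using adjoint_in_S[OF u] adjoint_in_S[OF v] form_adjoint u v
    by (intro adjoint_unique S_add) (simp_all add: form_add_right)
next
  fix c u assume u: "u \<in> S"
  show "adjoint T (sc c u) = sc c (adjoint T u)"
    using adjoint_in_S[OF u] form_adjoint u
    by (intro adjoint_unique S_scale) (simp_all add: form_scale_right)
qed (fact adjoint_in_S hnorm_adjoint_le)+

lemma opnorm_adjoint: "opnorm G S (adjoint T) = opnorm G S T"
proof (rule antisym)
  show "opnorm G S (adjoint T) \<le> opnorm G S T"
    by (rule opnorm_least[OF bounded_op_adjoint opnorm_nonneg[OF T] hnorm_adjoint_le])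
  have "hnorm (T v) \<le> opnorm G S (adjoint T) * hnorm v" if v: "v \<in> S" for v
  proof -
    have Tv: "T v \<in> S" by (rule bounded_op_in[OF T v])
    have "(hnorm (T v))\<^sup>2 = cmod (G v (adjoint T (T v)))"
      using hnorm_square_cmod[OF Tv] form_adjoint[OF Tv v] by simp
    also have "\<dots> \<le> hnorm v * hnorm (adjoint T (T v))"
      by (rule form_Cauchy_Schwarz[OF v adjoint_in_S[OF Tv]])
    also have "\<dots> \<le> hnorm v * (opnorm G S (adjoint T) * hnorm (T v))"
      using opnorm_bound[OF bounded_op_adjoint Tv] hnorm_nonneg[OF v] by (rule mult_left_mono)
    finally have "(hnorm (T v))\<^sup>2 \<le> (opnorm G S (adjoint T) * hnorm v) * hnorm (T v)"
      by (simp add: mult_ac)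
    then show ?thesis
      by (rule power2_le_mult_imp_le) (simp add: opnorm_nonneg[OF bounded_op_adjoint] hnorm_nonneg[OF v])
  qed
  then show "opnorm G S T \<le> opnorm G S (adjoint T)"
    by (rule opnorm_least[OF T opnorm_nonneg[OF bounded_op_adjoint]])
qed

end

lemma adjoint_inverse:
  assumes T: "bounded_op T" and W: "bounded_op W"
    and WT: "\<And>v. v \<in> S \<Longrightarrow> W (T v) = v" and u: "u \<in> S"
  shows "adjoint T (adjoint W u) = u"
proof (rule adjoint_unique[OF T adjoint_in_S[OF W u] u])
  fix v assume v: "v \<in> S"
  show "G (T v) (adjoint W u) = G v u"
    using form_adjoint[OF W u bounded_op_in[OF T v]] WT[OF v] by simp
qed

lemma coef_sum_eq_hnorm_adjoint:
  assumes U: "bounded_op U" and fb: "\<forall>n\<in>I. fb n = U (e n)" and f: "f \<in> S"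
  shows "coef_summable G fb I f" "coef_sum G fb I f = (hnorm (adjoint U f))\<^sup>2"
proof -
  have "cmod (G f (fb n)) = cmod (G (adjoint U f) (e n))" if n: "n \<in> I" for n
  proof -
    have "G (fb n) f = G (e n) (adjoint U f)" using fb n form_adjoint[OF U f e_in_S[OF n]] by simp
    then show ?thesis using form_cnj[of "fb n" f] form_cnj[of "e n" "adjoint U f"] by (metis complex_mod_cnj)
  qed
  then have sq: "(cmod (G f (fb n)))\<^sup>2 = (cmod (G (adjoint U f) (e n)))\<^sup>2" if "n \<in> I" for n
    using that by simp
  note eq = summable_on_cong[OF sq] infsum_cong[OF sq]
  show "coef_summable G fb I f"
    unfolding coef_summable_def using Bessel_summable[OF adjoint_in_S[OF U f]] by (simp only: eq)
  show "coef_sum G fb I f = (hnorm (adjoint U f))\<^sup>2"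
    unfolding coef_sum_def using Parseval_identity[OF adjoint_in_S[OF U f]] by (simp only: eq)
qed

end

section \<open>Frame bounds\<close>

text \<open>The frame sums use the form \<open>B\<close>, the norm is the one of the form \<open>N\<close>; on \<open>K\<^sup>-\<close> these
  are \<open>[\<cdot>,\<cdot>]\<close> and \<open>-[\<cdot>,\<cdot>]\<close>.\<close>
definition lower_frame_bounds ::
  "('a \<Rightarrow> 'a \<Rightarrow> complex) \<Rightarrow> ('a \<Rightarrow> 'a \<Rightarrow> complex) \<Rightarrow> ('i \<Rightarrow> 'a) \<Rightarrow> 'i set \<Rightarrow> 'a set \<Rightarrow> real set" where
  "lower_frame_bounds B N fb I S =
     {A. A > 0 \<and> (\<forall>f\<in>S. coef_summable B fb I f \<and> A * (fnorm N f)\<^sup>2 \<le> coef_sum B fb I f)}"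

definition upper_frame_bounds ::
  "('a \<Rightarrow> 'a \<Rightarrow> complex) \<Rightarrow> ('a \<Rightarrow> 'a \<Rightarrow> complex) \<Rightarrow> ('i \<Rightarrow> 'a) \<Rightarrow> 'i set \<Rightarrow> 'a set \<Rightarrow> real set" where
  "upper_frame_bounds B N fb I S =
     {B1. B1 > 0 \<and> (\<forall>f\<in>S. coef_summable B fb I f \<and> coef_sum B fb I f \<le> B1 * (fnorm N f)\<^sup>2)}"

lemma frame_bounds_uminus_form:
  "lower_frame_bounds (\<lambda>x y. - B x y) N fb I S = lower_frame_bounds B N fb I S"
  "upper_frame_bounds (\<lambda>x y. - B x y) N fb I S = upper_frame_bounds B N fb I S"
  by (simp_all add: lower_frame_bounds_def upper_frame_bounds_def coef_summable_def coef_sum_def)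

context hilbert_onb
begin

theorem frame_bounds_optimal:
  assumes U: "bounded_bij_op sc G S U" and nontrivial: "S \<noteq> {0}" and fb: "\<forall>n\<in>I. fb n = U (e n)"
  defines "a \<equiv> 1 / (opnorm G S (inv_into S U))\<^sup>2" and "b \<equiv> (opnorm G S U)\<^sup>2"
  shows "a \<in> lower_frame_bounds G G fb I S" "\<forall>A\<in>lower_frame_bounds G G fb I S. A \<le> a"
    "b \<in> upper_frame_bounds G G fb I S" "\<forall>B\<in>upper_frame_bounds G G fb I S. b \<le> B"
proof -
  have U': "bounded_op U" and bij: "bij_betw U S S"
    using U bounded_bij_op_imp_bounded_op unfolding bounded_bij_op_def by auto
  have W: "bounded_op (inv_into S U)" by (rule bounded_op_inv_into[OF U' bij])
  have UW: "U (inv_into S U x) = x" and WU: "inv_into S U (U x) = x" if "x \<in> S" for x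
    using that bij by (auto simp: bij_betw_def f_inv_into_f inv_into_f_f)
  note pair = bounded_op_adjoint[OF U'] bounded_op_adjoint[OF W]
    adjoint_inverse[OF U' W WU] adjoint_inverse[OF W U' UW] nontrivial
  note norms = opnorm_adjoint[OF U'] opnorm_adjoint[OF W]
  note frame_sum = coef_sum_eq_hnorm_adjoint[OF U' fb]
  have a: "a > 0" using opnorm_pos_if_inverse(2)[OF pair] unfolding a_def norms by simp
  have b: "b > 0" using opnorm_pos_if_inverse(1)[OF pair] unfolding b_def norms by simp
  show "a \<in> lower_frame_bounds G G fb I S"
    using a hnorm_square_bounds_by_opnorms(1)[OF pair] frame_sum unfolding lower_frame_bounds_def a_def norms by simp
  show "b \<in> upper_frame_bounds G G fb I S"
    using b hnorm_square_bounds_by_opnorms(2)[OF pair] frame_sum unfolding upper_frame_bounds_def b_def norms by simp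
  show "\<forall>A\<in>lower_frame_bounds G G fb I S. A \<le> a"
    using lower_bound_le_inverse_opnorm[OF pair] frame_sum unfolding lower_frame_bounds_def a_def norms by simp
  show "\<forall>B\<in>upper_frame_bounds G G fb I S. b \<le> B"
    using opnorm_square_le_upper_bound[OF pair] frame_sum unfolding upper_frame_bounds_def b_def norms by simp
qed

end

lemma krein_space_hilbert_onb:
  assumes K: "krein_space sc B Kp Km"
  shows "onb B Kp I e \<Longrightarrow> hilbert_onb sc B Kp I e"
    and "onb (\<lambda>x y. - B x y) Km I e \<Longrightarrow> hilbert_onb sc (\<lambda>x y. - B x y) Km I e"
proof -
  note parts = K[unfolded krein_space_def]
  have "vector_space sc" using parts by (elim conjE)
  then have module: "module sc" by (simp add: module_iff_vector_space)
  have add: "\<forall>x y z. B (x + y) z = B x z + B y z" using parts by (elim conjE)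
  have scale: "\<forall>c x y. B (sc c x) y = c * B x y" using parts by (elim conjE)
  have herm: "\<forall>x y. B y x = cnj (B x y)" using parts by (elim conjE)
  have sub_p: "module.subspace sc Kp" using parts by (elim conjE)
  have sub_m: "module.subspace sc Km" using parts by (elim conjE)
  have hilb_p: "hilbert_part B Kp" using parts by (elim conjE)
  have hilb_m: "hilbert_part (\<lambda>x y. - B x y) Km" using parts by (elim conjE)
  show "onb B Kp I e \<Longrightarrow> hilbert_onb sc B Kp I e"
    by (intro hilbert_onb.intro hilbert_subspace.intro hilbert_onb_axioms.intro module sub_p hilb_p
        add[rule_format] scale[rule_format] herm[rule_format])
  show "onb (\<lambda>x y. - B x y) Km I e \<Longrightarrow> hilbert_onb sc (\<lambda>x y. - B x y) Km I e"
  proof (intro hilbert_onb.intro hilbert_subspace.intro hilbert_onb_axioms.intro module sub_m hilb_m)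
    show "- B (x + y) z = - B x z + - B y z" "- B (sc c x) y = c * - B x y" "- B y x = cnj (- B x y)"
      for x y z c using add[rule_format, of x y z] scale[rule_format, of c x y] herm[rule_format, of x y]
      by simp_all
  qed
qed

lemma frame_inequalities_of_bounds:
  "A \<in> lower_frame_bounds B N fb I S \<Longrightarrow> B1 \<in> upper_frame_bounds B N fb I S \<Longrightarrow>
    A > 0 \<and> B1 > 0 \<and> (\<forall>f\<in>S. coef_summable B fb I f \<and>
      A * (fnorm N f)\<^sup>2 \<le> coef_sum B fb I f \<and> coef_sum B fb I f \<le> B1 * (fnorm N f)\<^sup>2)"
  unfolding lower_frame_bounds_def upper_frame_bounds_def by blast

theorem theorem3p4:
  fixes sc :: "complex \<Rightarrow> 'a::ab_group_add \<Rightarrow> 'a"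
    and B :: "'a \<Rightarrow> 'a \<Rightarrow> complex"
    and Kp Km :: "'a set"
    and Ip Im :: "'i set"
    and e fb :: "'i \<Rightarrow> 'a"
    and Up Um :: "'a \<Rightarrow> 'a"
  assumes krein: "krein_space sc B Kp Km"
    and Kp_nontriv: "Kp \<noteq> {0}" and Km_nontriv: "Km \<noteq> {0}"
    and disj: "Ip \<inter> Im = {}"
    and onb_p: "onb B Kp Ip e"
    and onb_m: "onb (\<lambda>x y. - B x y) Km Im e"
    and Up: "bounded_bij_op sc B Kp Up"
    and Um: "bounded_bij_op sc (\<lambda>x y. - B x y) Km Um"
    and fb_p: "\<forall>n\<in>Ip. fb n = Up (e n)"
    and fb_m: "\<forall>n\<in>Im. fb n = Um (e n)"
  shows
    "(\<exists>A B1 A' B1'. A > 0 \<and> B1 > 0 \<and> A' > 0 \<and> B1' > 0 \<and>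
        (\<forall>f\<in>Kp. coef_summable B fb Ip f \<and>
            A * (fnorm B f)\<^sup>2 \<le> coef_sum B fb Ip f \<and>
            coef_sum B fb Ip f \<le> B1 * (fnorm B f)\<^sup>2) \<and>
        (\<forall>f\<in>Km. coef_summable B fb Im f \<and>
            A' * (fnorm (\<lambda>x y. - B x y) f)\<^sup>2 \<le> coef_sum B fb Im f \<and>
            coef_sum B fb Im f \<le> B1' * (fnorm (\<lambda>x y. - B x y) f)\<^sup>2))
     \<and>
     (let LBp = {A. A > 0 \<and> (\<forall>f\<in>Kp. coef_summable B fb Ip f \<and>
                    A * (fnorm B f)\<^sup>2 \<le> coef_sum B fb Ip f)};
          UBp = {B1. B1 > 0 \<and> (\<forall>f\<in>Kp. coef_summable B fb Ip f \<and>
                    coef_sum B fb Ip f \<le> B1 * (fnorm B f)\<^sup>2)};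
          LBm = {A. A > 0 \<and> (\<forall>f\<in>Km. coef_summable B fb Im f \<and>
                    A * (fnorm (\<lambda>x y. - B x y) f)\<^sup>2 \<le> coef_sum B fb Im f)};
          UBm = {B1. B1 > 0 \<and> (\<forall>f\<in>Km. coef_summable B fb Im f \<and>
                    coef_sum B fb Im f \<le> B1 * (fnorm (\<lambda>x y. - B x y) f)\<^sup>2)};
          ap = 1 / (opnorm B Kp (inv_into Kp Up))\<^sup>2;
          bp = (opnorm B Kp Up)\<^sup>2;
          am = 1 / (opnorm (\<lambda>x y. - B x y) Km (inv_into Km Um))\<^sup>2;
          bm = (opnorm (\<lambda>x y. - B x y) Km Um)\<^sup>2
      in ap \<in> LBp \<and> (\<forall>A\<in>LBp. A \<le> ap) \<and>
         bp \<in> UBp \<and> (\<forall>B1\<in>UBp. bp \<le> B1) \<and>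
         am \<in> LBm \<and> (\<forall>A\<in>LBm. A \<le> am) \<and>
         bm \<in> UBm \<and> (\<forall>B1\<in>UBm. bm \<le> B1))"
proof -
  interpret P: hilbert_onb sc B Kp Ip e by (rule krein_space_hilbert_onb(1)[OF krein onb_p])
  interpret N: hilbert_onb sc "\<lambda>x y. - B x y" Km Im e by (rule krein_space_hilbert_onb(2)[OF krein onb_m])
  note P = P.frame_bounds_optimal[OF Up Kp_nontriv fb_p]
  note N = N.frame_bounds_optimal[OF Um Km_nontriv fb_m, unfolded frame_bounds_uminus_form]
  show ?thesis
    unfolding Let_def lower_frame_bounds_def[symmetric] upper_frame_bounds_def[symmetric]
    using P N frame_inequalities_of_bounds[OF P(1,3)] frame_inequalities_of_bounds[OF N(1,3)] by blast
qed

end
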